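(* Let $G$ be a finite group and $E$ a $k^G$-comodule algebra. The map $c$ sending a $(k^G,E)$-Hopf torsor $T$ to the isomorphism class $[T^\times]$ of the $(G,E^\times)$-group torsor $T^\times$ induces a bijection of pointed sets $\mathcal{T}ors(k^G,E)\cong\mathrm{Tors}(G,E^\times)$.
   Context: $k^G$: Hopf algebra with $k$-basis $\{\delta_g\}$, $\delta_g\delta_{g'}=\partial_{g,g'}\delta_g$, unit $\sum_g\delta_g$, $\Delta(\delta_g)=\sum_{ab=g}\delta_a\otimes\delta_b$, $\varepsilon(\delta_g)=\partial_{g,e}$, $\sigma(\delta_g)=\delta_{g^{-1}}$. $E$ is a $k^G$-comodule algebra (coaction an algebra map) with $G$-action $\Delta_E(x)=\sum_g{}^gx\otimes\delta_g$ on $E^\times$. A $(k^G,E)$-Hopf module $T$ is a right $E$-module with coaction $\Delta_T(tx)=\Delta_T(t)\Delta_E(x)$, and $\Delta_T(u)=\sum_g{}^gu\otimes\delta_g$ gives a $G$-action on $T$. $T^\times=\{u:\ x\mapsto ux,\ E\to T\text{ bijective}\}$ (analogously $(T\otimes H)^\times$ over $E\otimes H$), $T^\bullet=\{u\in T^\times:\Delta_T(u)\in(T\otimes H)^\times\}$; a Hopf torsor is a Hopf module with $T^\bullet\ne\emptyset$; $\mathcal{T}ors(k^G,E)$ is the set of isomorphism classes (as Hopf modules) of Hopf torsors, pointed by $(E,\Delta_E)$. For $T$ a Hopf torsor, $T^\times$ with the restricted $G$-action and right $E^\times$-multiplication is a $(G,E^\times)$-group torsor (a nonempty left $G$-set with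 compatible, simply transitive right $E^\times$-action, ${}^g(pa)={}^gp\,{}^ga$). $\mathrm{Tors}(G,E^\times)$ is the set of isomorphism classes of $(G,E^\times)$-group torsors, pointed by the class of $E^\times$. *)

theory Defs
  imports "HOL-Algebra.Group" "HOL-Library.FuncSet"
begin

(* Conventions:
   - k is a commutative ring (type 'k), E is a k-algebra given by a type 'e :: ring_1
     together with a central ring homomorphism  scal : k -> E.
   - G is a finite group (HOL-Algebra record, carrier G).
   - Since k^G is free with basis delta_g, an element  sum_g x_g (x) delta_g  of  M (x) k^G
     is represented by the function  g |-> x_g  on carrier G.  Thus a coaction on M is a
     map  Delta :: 'm => 'g => 'm, and  Delta x g  is the coefficient of delta_g. *)

definition k_algebra :: "('k::comm_ring_1 \<Rightarrow> 'e::ring_1) \<Rightarrow> bool" where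
  "k_algebra scal \<longleftrightarrow>
     scal 1 = 1 \<and> (\<forall>a b. scal (a + b) = scal a + scal b) \<and>
     (\<forall>a b. scal (a * b) = scal a * scal b) \<and> (\<forall>a x. scal a * x = x * scal a)"

text \<open>Coassociativity for
  Delta(delta_g) = sum over ab=g of delta_a (x) delta_b, and counit eps(delta_g) = [g = 1].\<close>
definition comodule :: "('g,'z) monoid_scheme \<Rightarrow> ('m::ab_group_add \<Rightarrow> 'k \<Rightarrow> 'm)
      \<Rightarrow> ('m \<Rightarrow> 'g \<Rightarrow> 'm) \<Rightarrow> bool" where
  "comodule G sm D \<longleftrightarrow>
     (\<forall>x y. \<forall>g\<in>carrier G. D (x + y) g = D x g + D y g) \<and>
     (\<forall>x c. \<forall>g\<in>carrier G. D (sm x c) g = sm (D x g) c) \<and>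
     (\<forall>x. \<forall>a\<in>carrier G. \<forall>b\<in>carrier G. D (D x b) a = D x (a \<otimes>\<^bsub>G\<^esub> b)) \<and>
     (\<forall>x. D x \<one>\<^bsub>G\<^esub> = x)"

text \<open>k^G-comodule algebra: the coaction is moreover an algebra map E -> E (x) k^G,
  where E (x) k^G has the componentwise product and unit sum_g 1 (x) delta_g.\<close>
definition comodule_algebra :: "('g,'z) monoid_scheme \<Rightarrow> ('k::comm_ring_1 \<Rightarrow> 'e::ring_1)
      \<Rightarrow> ('e \<Rightarrow> 'g \<Rightarrow> 'e) \<Rightarrow> bool" where
  "comodule_algebra G scal D \<longleftrightarrow>
     k_algebra scal \<and> comodule G (\<lambda>x c. scal c * x) D \<and>
     (\<forall>x y. \<forall>g\<in>carrier G. D (x * y) g = D x g * D y g) \<and>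
     (\<forall>g\<in>carrier G. D 1 g = 1)"

definition hopf_module :: "('g,'z) monoid_scheme \<Rightarrow> ('k::comm_ring_1 \<Rightarrow> 'e::ring_1)
      \<Rightarrow> ('e \<Rightarrow> 'g \<Rightarrow> 'e) \<Rightarrow> ('t::ab_group_add \<Rightarrow> 'e \<Rightarrow> 't) \<Rightarrow> ('t \<Rightarrow> 'g \<Rightarrow> 't) \<Rightarrow> bool" where
  "hopf_module G scal D tm DT \<longleftrightarrow>
     (\<forall>t t' x. tm (t + t') x = tm t x + tm t' x) \<and>
     (\<forall>t x y. tm t (x + y) = tm t x + tm t y) \<and>
     (\<forall>t. tm t 1 = t) \<and>
     (\<forall>t x y. tm (tm t x) y = tm t (x * y)) \<and>
     comodule G (\<lambda>t c. tm t (scal c)) DT \<and>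
     (\<forall>t x. \<forall>g\<in>carrier G. DT (tm t x) g = tm (DT t g) (D x g))"

definition Tx :: "('t \<Rightarrow> 'e \<Rightarrow> 't) \<Rightarrow> 't set" where
  "Tx tm = {u. bij (tm u)}"

text \<open>(T (x) k^G)^x over E (x) k^G, with T (x) k^G and E (x) k^G represented as
  (extensional) functions on carrier G, and the componentwise module structure.\<close>
definition THx :: "('g,'z) monoid_scheme \<Rightarrow> ('t \<Rightarrow> 'e \<Rightarrow> 't) \<Rightarrow> ('g \<Rightarrow> 't) set" where
  "THx G tm = {f \<in> carrier G \<rightarrow>\<^sub>E UNIV.
      bij_betw (\<lambda>\<phi>. \<lambda>g\<in>carrier G. tm (f g) (\<phi> g)) (carrier G \<rightarrow>\<^sub>E UNIV) (carrier G \<rightarrow>\<^sub>E UNIV)}"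

definition Tbullet :: "('g,'z) monoid_scheme \<Rightarrow> ('t \<Rightarrow> 'e \<Rightarrow> 't) \<Rightarrow> ('t \<Rightarrow> 'g \<Rightarrow> 't) \<Rightarrow> 't set" where
  "Tbullet G tm DT = {u \<in> Tx tm. (\<lambda>g\<in>carrier G. DT u g) \<in> THx G tm}"

definition hopf_torsor :: "('g,'z) monoid_scheme \<Rightarrow> ('k::comm_ring_1 \<Rightarrow> 'e::ring_1)
      \<Rightarrow> ('e \<Rightarrow> 'g \<Rightarrow> 'e) \<Rightarrow> ('t::ab_group_add \<Rightarrow> 'e \<Rightarrow> 't) \<Rightarrow> ('t \<Rightarrow> 'g \<Rightarrow> 't) \<Rightarrow> bool" where
  "hopf_torsor G scal D tm DT \<longleftrightarrow> hopf_module G scal D tm DT \<and> Tbullet G tm DT \<noteq> {}"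

definition hopf_iso :: "('g,'z) monoid_scheme \<Rightarrow> ('t::ab_group_add \<Rightarrow> 'e \<Rightarrow> 't) \<Rightarrow> ('t \<Rightarrow> 'g \<Rightarrow> 't)
      \<Rightarrow> ('s::ab_group_add \<Rightarrow> 'e \<Rightarrow> 's) \<Rightarrow> ('s \<Rightarrow> 'g \<Rightarrow> 's) \<Rightarrow> bool" where
  "hopf_iso G tm DT tm' DT' \<longleftrightarrow> (\<exists>f. bij f \<and> (\<forall>t t'. f (t + t') = f t + f t') \<and>
      (\<forall>t x. f (tm t x) = tm' (f t) x) \<and> (\<forall>t. \<forall>g\<in>carrier G. f (DT t g) = DT' (f t) g))"

definition Eunits :: "'e::ring_1 set" where
  "Eunits = {a. \<exists>b. a * b = 1 \<and> b * a = 1}"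

definition group_torsor :: "('g,'z) monoid_scheme \<Rightarrow> ('e::ring_1 \<Rightarrow> 'g \<Rightarrow> 'e) \<Rightarrow> 'p set
      \<Rightarrow> ('g \<Rightarrow> 'p \<Rightarrow> 'p) \<Rightarrow> ('p \<Rightarrow> 'e \<Rightarrow> 'p) \<Rightarrow> bool" where
  "group_torsor G D P la ra \<longleftrightarrow>
     P \<noteq> {} \<and>
     (\<forall>g\<in>carrier G. \<forall>p\<in>P. la g p \<in> P) \<and>
     (\<forall>p\<in>P. la \<one>\<^bsub>G\<^esub> p = p) \<and>
     (\<forall>g\<in>carrier G. \<forall>h\<in>carrier G. \<forall>p\<in>P. la (g \<otimes>\<^bsub>G\<^esub> h) p = la g (la h p)) \<and>
     (\<forall>p\<in>P. \<forall>a\<in>Eunits. ra p a \<in> P) \<and>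
     (\<forall>p\<in>P. ra p 1 = p) \<and>
     (\<forall>p\<in>P. \<forall>a\<in>Eunits. \<forall>b\<in>Eunits. ra (ra p a) b = ra p (a * b)) \<and>
     (\<forall>p\<in>P. \<forall>q\<in>P. \<exists>!a. a \<in> Eunits \<and> ra p a = q) \<and>
     (\<forall>g\<in>carrier G. \<forall>p\<in>P. \<forall>a\<in>Eunits. la g (ra p a) = ra (la g p) (D a g))"

definition gtorsor_iso :: "('g,'z) monoid_scheme \<Rightarrow> 'p set \<Rightarrow> ('g \<Rightarrow> 'p \<Rightarrow> 'p) \<Rightarrow> ('p \<Rightarrow> 'e::ring_1 \<Rightarrow> 'p)
      \<Rightarrow> 'q set \<Rightarrow> ('g \<Rightarrow> 'q \<Rightarrow> 'q) \<Rightarrow> ('q \<Rightarrow> 'e \<Rightarrow> 'q) \<Rightarrow> bool" where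
  "gtorsor_iso G P la ra Q la' ra' \<longleftrightarrow> (\<exists>f. bij_betw f P Q \<and>
     (\<forall>g\<in>carrier G. \<forall>p\<in>P. f (la g p) = la' g (f p)) \<and>
     (\<forall>p\<in>P. \<forall>a\<in>Eunits. f (ra p a) = ra' (f p) a))"

end

theory Submission
  imports Defs
begin

(* For a Hopf torsor T, the set T^x of free generators is a (G,E^x)-group torsor:
   E^x acts simply transitively by right multiplication because each u in T^x
   identifies T with E, and the coaction maps T^x to itself because T^bullet is
   nonempty and DT(u a) = DT(u) D(a).  Every element of T^x is a coordinate system
   for T, so a torsor isomorphism T^x -> T'^x extends uniquely to a Hopf module
   isomorphism T -> T' (and conversely restricts).  For surjectivity, a base point
   p0 of a group torsor P determines a 1-cocycle c : G -> E^x by p0 c(g) = g.p0,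
   and E with the twisted coaction x |-> c(g) D(x)(g) is a Hopf torsor whose unit
   torsor is isomorphic to P via a |-> p0 a; the trivial cocycle gives the base
   point E. *)

text \<open>An element is a unit exactly when left multiplication by it is bijective;
  this identifies the generators of the regular module E with E^x.\<close>
lemma unit_iff_bij: "bij ((*) (a::'e::ring_1)) \<longleftrightarrow> a \<in> Eunits"
proof
  assume b: "bij ((*) a)"
  then obtain c where ac: "a * c = 1" by (metis bij_pointE)
  have "a * (c * a) = a * 1" by (simp add: mult.assoc[symmetric] ac)
  hence "c * a = 1" using b by (meson bij_is_inj injD)
  thus "a \<in> Eunits" using ac unfolding Eunits_def by blast
next
  assume "a \<in> Eunits"
  then obtain c where ac: "a * c = 1" "c * a = 1" unfolding Eunits_def by blast
  show "bij ((*) a)"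
    by (rule o_bij[where g="(*) c"]) (auto simp: fun_eq_iff mult.assoc[symmetric] ac)
qed

lemma Tx_mult: "Tx ((*) :: 'e::ring_1 \<Rightarrow> _) = Eunits"
  unfolding Tx_def using unit_iff_bij by blast

lemma Eunits_1: "1 \<in> Eunits"
  unfolding Eunits_def by auto

lemma Eunits_mult: "a \<in> Eunits \<Longrightarrow> b \<in> Eunits \<Longrightarrow> a * b \<in> Eunits"
  unfolding Eunits_def
  by (clarsimp, rename_tac c d, rule_tac x="d * c" in exI) (metis mult.assoc mult_1_right)

text \<open>The coaction of a comodule algebra is multiplicative and unital in each
  component, hence each component maps units to units (the G-action on E^x).\<close>
lemma comodule_algebra_unit:
  assumes "comodule_algebra G scal D" and "a \<in> Eunits" and "g \<in> carrier G"
  shows "D a g \<in> Eunits"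
proof -
  obtain b where ab: "a * b = 1" "b * a = 1" using assms(2) unfolding Eunits_def by blast
  have "D a g * D b g = 1" "D b g * D a g = 1"
    using assms(1,3) ab unfolding comodule_algebra_def by metis+
  thus ?thesis unfolding Eunits_def by blast
qed

text \<open>A unital right action of a ring; this is all of the module structure needed
  to see that the generators T^x form a right E^x-torsor.\<close>
locale right_unital_action =
  fixes tm :: "'t \<Rightarrow> 'e::ring_1 \<Rightarrow> 't"
  assumes act_one: "tm t 1 = t"
    and act_mult: "tm (tm t x) y = tm t (x * y)"
begin

lemma act_comp: "tm (tm u a) = tm u \<circ> (*) a"
  by (simp add: fun_eq_iff act_mult)

lemma Tx_act: "u \<in> Tx tm \<Longrightarrow> a \<in> Eunits \<Longrightarrow> tm u a \<in> Tx tm"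
  unfolding Tx_def using act_comp unit_iff_bij bij_comp by fastforce

lemma Tx_transitive:
  assumes "u \<in> Tx tm" "v \<in> Tx tm"
  shows "\<exists>!a. a \<in> Eunits \<and> tm u a = v"
proof -
  have bu: "bij (tm u)" and bv: "bij (tm v)" using assms by (auto simp: Tx_def)
  define a where "a = inv_into UNIV (tm u) v"
  have ua: "tm u a = v" unfolding a_def using bu by (meson bij_is_surj surj_f_inv_f)
  have "(*) a = inv_into UNIV (tm u) \<circ> tm v"
    using bu by (auto simp: fun_eq_iff ua[symmetric] act_mult bij_is_inj)
  hence "a \<in> Eunits" using bu bv unit_iff_bij by (metis bij_comp bij_imp_bij_inv)
  moreover have "\<And>b. tm u b = v \<Longrightarrow> b = a" using bu ua by (metis bij_is_inj injD)
  ultimately show ?thesis using ua by blast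
qed

end

lemma hopf_module_coaction_act:
  "hopf_module G scal D tm DT \<Longrightarrow> g \<in> carrier G \<Longrightarrow> DT (tm t x) g = tm (DT t g) (D x g)"
  unfolding hopf_module_def by blast

lemma hopf_module_distrib: "hopf_module G scal D tm DT \<Longrightarrow> tm t (x + y) = tm t x + tm t y"
  unfolding hopf_module_def by blast

lemma hopf_module_right_unital_action:
  "hopf_module G scal D tm DT \<Longrightarrow> right_unital_action tm"
  unfolding hopf_module_def by unfold_locales blast+

text \<open>Since E \<otimes> k^G is a product of copies of E, an element of T \<otimes> k^G generates
  it exactly when every component generates T.\<close>
lemma restrict_in_THx_iff:
  fixes tm :: "'t \<Rightarrow> 'e \<Rightarrow> 't"
  shows "(\<lambda>g\<in>carrier G. f g) \<in> THx G tm \<longleftrightarrow> (\<forall>g\<in>carrier G. bij (tm (f g)))"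
proof
  let ?F = "\<lambda>g\<in>carrier G. f g"
  let ?M = "\<lambda>\<phi>. \<lambda>h\<in>carrier G. tm (?F h) (\<phi> h)"
  assume "?F \<in> THx G tm"
  hence B: "bij_betw ?M (carrier G \<rightarrow>\<^sub>E UNIV) (carrier G \<rightarrow>\<^sub>E UNIV)" by (simp add: THx_def)
  show "\<forall>g\<in>carrier G. bij (tm (f g))"
  proof (intro ballI bijI injI)
    fix g x y assume g: "g \<in> carrier G" and eq: "tm (f g) x = tm (f g) y"
    let ?p = "\<lambda>h\<in>carrier G. x" and ?q = "\<lambda>h\<in>carrier G. if h = g then y else x"
    have "?M ?p = ?M ?q" using eq by (auto simp: fun_eq_iff)
    hence "?p = ?q" using inj_onD[OF bij_betw_imp_inj_on[OF B]] by auto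
    thus "x = y" using g by (metis (mono_tags) restrict_apply')
  next
    fix g assume g: "g \<in> carrier G"
    show "surj (tm (f g))" unfolding surj_def
    proof
      fix t
      have "(\<lambda>h\<in>carrier G. t) \<in> ?M ` (carrier G \<rightarrow>\<^sub>E UNIV)"
        using bij_betw_imp_surj_on[OF B] by auto
      then obtain \<phi> where \<phi>: "(\<lambda>h\<in>carrier G. t) = ?M \<phi>" by (rule imageE)
      have "t = ?M \<phi> g" using g fun_cong[OF \<phi>, of g] by simp
      thus "\<exists>x. t = tm (f g) x" using g by auto
    qed
  qed
next
  let ?M = "\<lambda>\<phi>. \<lambda>h\<in>carrier G. tm ((\<lambda>g\<in>carrier G. f g) h) (\<phi> h)"
  let ?N = "\<lambda>\<psi>. \<lambda>h\<in>carrier G. inv_into UNIV (tm (f h)) (\<psi> h)"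
  assume bijs: "\<forall>g\<in>carrier G. bij (tm (f g))"
  have "bij_betw ?M (carrier G \<rightarrow>\<^sub>E UNIV) (carrier G \<rightarrow>\<^sub>E UNIV)"
  proof (rule bij_betw_byWitness[where f'="?N"])
    show "\<forall>a\<in>carrier G \<rightarrow>\<^sub>E UNIV. ?N (?M a) = a"
      using bijs by (auto simp: fun_eq_iff PiE_def extensional_def bij_is_inj)
    show "\<forall>a\<in>carrier G \<rightarrow>\<^sub>E UNIV. ?M (?N a) = a"
      using bijs by (auto simp: fun_eq_iff PiE_def extensional_def bij_is_surj surj_f_inv_f)
  qed auto
  thus "(\<lambda>g\<in>carrier G. f g) \<in> THx G tm" by (simp add: THx_def)
qed

lemma Tbullet_iff:
  "u \<in> Tbullet G tm DT \<longleftrightarrow> u \<in> Tx tm \<and> (\<forall>g\<in>carrier G. DT u g \<in> Tx tm)"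
  unfolding Tbullet_def restrict_in_THx_iff by (simp add: Tx_def)

section \<open>The group torsor of a Hopf torsor\<close>

text \<open>In a Hopf torsor the coaction preserves generators, i.e. T^bullet = T^x:
  a generator u is u0 a for a point u0 of T^bullet and a unit a, and
  DT u g = (DT u0 g) (D a g) is a generator times a unit.\<close>
lemma hopf_torsor_coaction_Tx:
  assumes ca: "comodule_algebra G scal D" and ht: "hopf_torsor G scal D tm DT"
    and u: "u \<in> Tx tm" and g: "g \<in> carrier G"
  shows "DT u g \<in> Tx tm"
proof -
  have hm: "hopf_module G scal D tm DT" using ht by (simp add: hopf_torsor_def)
  interpret right_unital_action tm by (rule hopf_module_right_unital_action[OF hm])
  obtain u0 where "u0 \<in> Tbullet G tm DT" using ht unfolding hopf_torsor_def by blast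
  hence u0: "u0 \<in> Tx tm" "\<forall>g\<in>carrier G. DT u0 g \<in> Tx tm" by (simp_all add: Tbullet_iff)
  obtain a where a: "a \<in> Eunits" "tm u0 a = u" using Tx_transitive[OF u0(1) u] by blast
  have "DT u g = tm (DT u0 g) (D a g)" using hopf_module_coaction_act[OF hm g] a(2) by metis
  thus ?thesis using Tx_act[OF _ comodule_algebra_unit[OF ca a(1) g]] u0(2) g by simp
qed

lemma hopf_torsor_group_torsor:
  assumes ca: "comodule_algebra G scal D" and ht: "hopf_torsor G scal D tm DT"
  shows "group_torsor G D (Tx tm) (\<lambda>g u. DT u g) tm"
proof -
  have hm: "hopf_module G scal D tm DT" using ht by (simp add: hopf_torsor_def)
  interpret right_unital_action tm by (rule hopf_module_right_unital_action[OF hm])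
  have comod: "comodule G (\<lambda>t c. tm t (scal c)) DT"
    using hm unfolding hopf_module_def by blast
  have "Tx tm \<noteq> {}" using ht unfolding hopf_torsor_def Tbullet_def by blast
  thus ?thesis
    unfolding group_torsor_def
    using hopf_torsor_coaction_Tx[OF ca ht] comod[unfolded comodule_def]
      Tx_act act_one act_mult Tx_transitive hopf_module_coaction_act[OF hm] by simp
qed

section \<open>Isomorphisms of Hopf torsors versus isomorphisms of group torsors\<close>

lemma linear_bij_Tx:
  assumes bf: "bij f" and lin: "\<And>t x. f (tm t x) = tm' (f t) x"
  shows "bij_betw f (Tx tm) (Tx tm')"
proof (rule bij_betw_byWitness[where f'="inv_into UNIV f"])
  have inv_lin: "inv_into UNIV f (tm' v x) = tm (inv_into UNIV f v) x" for v x
    using bf lin by (metis bij_inv_eq_iff)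
  show "f ` Tx tm \<subseteq> Tx tm'"
  proof
    fix v assume "v \<in> f ` Tx tm"
    then obtain u where "u \<in> Tx tm" "v = f u" by blast
    moreover have "tm' (f u) = f \<circ> tm u" by (simp add: fun_eq_iff lin)
    ultimately show "v \<in> Tx tm'" using bf by (simp add: Tx_def bij_comp)
  qed
  show "inv_into UNIV f ` Tx tm' \<subseteq> Tx tm"
  proof
    fix u assume "u \<in> inv_into UNIV f ` Tx tm'"
    then obtain v where "v \<in> Tx tm'" "u = inv_into UNIV f v" by blast
    moreover have "tm (inv_into UNIV f v) = inv_into UNIV f \<circ> tm' v" by (simp add: fun_eq_iff inv_lin)
    ultimately show "u \<in> Tx tm" using bf by (simp add: Tx_def bij_comp bij_imp_bij_inv)
  qed
qed (use bf in \<open>auto simp: bij_is_inj bij_is_surj surj_f_inv_f\<close>)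

lemma hopf_iso_imp_gtorsor_iso:
  assumes "hopf_iso G tm DT tm' DT'"
  shows "gtorsor_iso G (Tx tm) (\<lambda>g u. DT u g) tm (Tx tm') (\<lambda>g u. DT' u g) tm'"
proof -
  obtain f where bf: "bij f" and lin: "\<forall>t x. f (tm t x) = tm' (f t) x"
    and col: "\<forall>t. \<forall>g\<in>carrier G. f (DT t g) = DT' (f t) g"
    using assms unfolding hopf_iso_def by (elim exE conjE)
  show ?thesis unfolding gtorsor_iso_def
    by (intro exI[of _ f] conjI ballI) (simp_all add: linear_bij_Tx[OF bf] col lin)
qed

text \<open>A pair of generators u0 of T and v0 of T' gives the coordinate change
  T \<cong> E \<cong> T', u0 x \<mapsto> v0 x; it is an additive, E-linear bijection.\<close>
lemma coordinate_change:
  fixes tm :: "'t::ab_group_add \<Rightarrow> 'e::ring_1 \<Rightarrow> 't" and tm' :: "'s::ab_group_add \<Rightarrow> 'e \<Rightarrow> 's"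
  assumes "right_unital_action tm" and "right_unital_action tm'"
    and distrib: "\<And>t x y. tm t (x + y) = tm t x + tm t y"
    and distrib': "\<And>t x y. tm' t (x + y) = tm' t x + tm' t y"
    and u0: "u0 \<in> Tx tm" and v0: "v0 \<in> Tx tm'"
  obtains f where "bij f" and "\<And>t t'. f (t + t') = f t + f t'"
    and "\<And>t x. f (tm t x) = tm' (f t) x" and "\<And>x. f (tm u0 x) = tm' v0 x"
proof -
  interpret T: right_unital_action tm by fact
  interpret T': right_unital_action tm' by fact
  have bu: "bij (tm u0)" and bv: "bij (tm' v0)" using u0 v0 by (auto simp: Tx_def)
  define I where "I = inv_into UNIV (tm u0)"
  have I1: "tm u0 (I t) = t" for t unfolding I_def using bu by (meson bij_is_surj surj_f_inv_f)
  have I2: "I (tm u0 x) = x" for x unfolding I_def using bu by (meson bij_is_inj inv_f_f)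
  define f where "f t = tm' v0 (I t)" for t
  have "bij f" unfolding f_def I_def using bij_comp[OF bij_imp_bij_inv[OF bu] bv] by (simp add: comp_def)
  moreover have "f (tm u0 x) = tm' v0 x" for x unfolding f_def I2 ..
  moreover have "f (t + t') = f t + f t'" for t t'
  proof -
    have "tm u0 (I t + I t') = t + t'" using distrib I1 by simp
    hence "I (t + t') = I t + I t'" using I2 by metis
    thus ?thesis unfolding f_def using distrib' by simp
  qed
  moreover have "f (tm t x) = tm' (f t) x" for t x
  proof -
    have "tm u0 (I t * x) = tm t x" using T.act_mult I1 by metis
    hence "I (tm t x) = I t * x" using I2 by metis
    thus ?thesis unfolding f_def using T'.act_mult by simp
  qed
  ultimately show ?thesis using that by blast
qed

text \<open>Extension: a group torsor isomorphism \<phi> : T^x \<rightarrow> T'^x is the restriction of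
  the coordinate change determined by u0 and \<phi> u0, which is therefore colinear, hence a
  Hopf module isomorphism.\<close>
lemma gtorsor_iso_imp_hopf_iso:
  assumes ca: "comodule_algebra G scal D"
    and ht: "hopf_torsor G scal D tm DT" and ht': "hopf_torsor G scal D tm' DT'"
    and "gtorsor_iso G (Tx tm) (\<lambda>g u. DT u g) tm (Tx tm') (\<lambda>g u. DT' u g) tm'"
  shows "hopf_iso G tm DT tm' DT'"
proof -
  have hm: "hopf_module G scal D tm DT" using ht by (simp add: hopf_torsor_def)
  have hm': "hopf_module G scal D tm' DT'" using ht' by (simp add: hopf_torsor_def)
  interpret right_unital_action tm by (rule hopf_module_right_unital_action[OF hm])
  obtain \<phi> where b\<phi>: "bij_betw \<phi> (Tx tm) (Tx tm')"
    and \<phi>_col: "\<And>g u. g \<in> carrier G \<Longrightarrow> u \<in> Tx tm \<Longrightarrow> \<phi> (DT u g) = DT' (\<phi> u) g"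
    and \<phi>_lin: "\<And>u a. u \<in> Tx tm \<Longrightarrow> a \<in> Eunits \<Longrightarrow> \<phi> (tm u a) = tm' (\<phi> u) a"
    using assms(4) unfolding gtorsor_iso_def by blast
  obtain u0 where u0: "u0 \<in> Tx tm" using ht unfolding hopf_torsor_def Tbullet_def by blast
  have v0: "\<phi> u0 \<in> Tx tm'" using b\<phi> u0 bij_betwE by blast
  obtain f where f: "bij f" "\<And>t t'. f (t + t') = f t + f t'"
    "\<And>t x. f (tm t x) = tm' (f t) x" "\<And>x. f (tm u0 x) = tm' (\<phi> u0) x"
    by (rule coordinate_change[OF hopf_module_right_unital_action[OF hm]
        hopf_module_right_unital_action[OF hm'] hopf_module_distrib[OF hm]
        hopf_module_distrib[OF hm'] u0 v0]) blast+
  have f_\<phi>: "f u = \<phi> u" if u: "u \<in> Tx tm" for u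
  proof -
    obtain a where a: "a \<in> Eunits" "tm u0 a = u" using Tx_transitive[OF u0 u] by blast
    thus ?thesis using f(4)[of a] \<phi>_lin[OF u0 a(1)] by simp
  qed
  have "f (DT t g) = DT' (f t) g" if g: "g \<in> carrier G" for t g
  proof -
    obtain x where x: "t = tm u0 x" using u0 unfolding Tx_def by (blast elim: bij_pointE)
    have "f (DT t g) = f (tm (DT u0 g) (D x g))" using hopf_module_coaction_act[OF hm g] x by simp
    also have "\<dots> = tm' (\<phi> (DT u0 g)) (D x g)"
      using f(3) f_\<phi>[OF hopf_torsor_coaction_Tx[OF ca ht u0 g]] by simp
    also have "\<dots> = DT' (f t) g"
      using \<phi>_col[OF g u0] hopf_module_coaction_act[OF hm' g] x f(4) by simp
    finally show ?thesis .
  qed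
  thus ?thesis unfolding hopf_iso_def using f(1-3) by blast
qed

section \<open>Twisted Hopf torsors\<close>

definition cocycle :: "('g,'z) monoid_scheme \<Rightarrow> ('e::ring_1 \<Rightarrow> 'g \<Rightarrow> 'e) \<Rightarrow> ('g \<Rightarrow> 'e) \<Rightarrow> bool"
  where "cocycle G D c \<longleftrightarrow> (\<forall>g\<in>carrier G. c g \<in> Eunits) \<and> c \<one>\<^bsub>G\<^esub> = 1 \<and>
     (\<forall>a\<in>carrier G. \<forall>b\<in>carrier G. c (a \<otimes>\<^bsub>G\<^esub> b) = c a * D (c b) a)"

text \<open>Twisting the coaction of E by a cocycle c, x \<mapsto> c(g) D(x)(g), makes E a Hopf
  torsor with 1 \<in> E^bullet; the cocycle identity is exactly coassociativity.\<close>
lemma twisted_hopf_torsor: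
  fixes D :: "'e::ring_1 \<Rightarrow> 'g \<Rightarrow> 'e"
  assumes ca: "comodule_algebra G scal D" and c: "cocycle G D c"
  shows "hopf_torsor G scal D (*) (\<lambda>x g. c g * D x g)"
proof -
  have cmE: "comodule G (\<lambda>x c. scal c * x) D"
    and mul: "\<And>x y g. g \<in> carrier G \<Longrightarrow> D (x * y) g = D x g * D y g"
    and one: "\<And>g. g \<in> carrier G \<Longrightarrow> D 1 g = 1"
    using ca unfolding comodule_algebra_def by auto
  have add: "\<And>x y g. g \<in> carrier G \<Longrightarrow> D (x + y) g = D x g + D y g"
    and sc: "\<And>x k g. g \<in> carrier G \<Longrightarrow> D (scal k * x) g = scal k * D x g"
    and coassoc: "\<And>x a b. a \<in> carrier G \<Longrightarrow> b \<in> carrier G \<Longrightarrow> D (D x b) a = D x (a \<otimes>\<^bsub>G\<^esub> b)"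
    and counit: "\<And>x. D x \<one>\<^bsub>G\<^esub> = x"
    using cmE unfolding comodule_def by blast+
  have c1: "c \<one>\<^bsub>G\<^esub> = 1"
    and c_mult: "\<And>a b. a \<in> carrier G \<Longrightarrow> b \<in> carrier G \<Longrightarrow> c (a \<otimes>\<^bsub>G\<^esub> b) = c a * D (c b) a"
    using c unfolding cocycle_def by blast+
  text \<open>Scalars are coinvariant, since D is k-linear and unital.\<close>
  have D_scal: "D (scal k) g = scal k" if "g \<in> carrier G" for k g
    using sc[OF that, of k 1] one[OF that] by simp
  have "comodule G (\<lambda>t k. t * scal k) (\<lambda>x g. c g * D x g)"
    unfolding comodule_def
  proof (intro conjI ballI allI)
    fix x y g assume g: "g \<in> carrier G"
    show "c g * D (x + y) g = c g * D x g + c g * D y g" using add[OF g] by (simp add: distrib_left)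
  next
    fix x k g assume g: "g \<in> carrier G"
    show "c g * D (x * scal k) g = c g * D x g * scal k"
      using mul[OF g] D_scal[OF g] by (simp add: mult.assoc)
  next
    fix x a b assume a: "a \<in> carrier G" and b: "b \<in> carrier G"
    show "c a * D (c b * D x b) a = c (a \<otimes>\<^bsub>G\<^esub> b) * D x (a \<otimes>\<^bsub>G\<^esub> b)"
      using mul[OF a] coassoc[OF a b] c_mult[OF a b] by (simp add: mult.assoc)
  next
    fix x show "c \<one>\<^bsub>G\<^esub> * D x \<one>\<^bsub>G\<^esub> = x" using c1 counit by simp
  qed
  hence hm: "hopf_module G scal D (*) (\<lambda>x g. c g * D x g)"
    unfolding hopf_module_def using mul by (auto simp: algebra_simps)
  have "\<forall>g\<in>carrier G. c g * D 1 g \<in> Tx (*)"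
    using c one unfolding cocycle_def Tx_mult by simp
  hence "1 \<in> Tbullet G (*) (\<lambda>x g. c g * D x g)" by (simp add: Tbullet_iff Tx_mult Eunits_1)
  thus ?thesis using hm unfolding hopf_torsor_def by blast
qed

lemma group_torsor_cocycle:
  assumes grp: "group G" and ca: "comodule_algebra G scal D"
    and gt: "group_torsor G D P la ra" and p0: "p0 \<in> P"
  obtains c where "cocycle G D c" and "\<And>g. g \<in> carrier G \<Longrightarrow> ra p0 (c g) = la g p0"
proof -
  note gt = gt[unfolded group_torsor_def]
  define c where "c g = (THE a. a \<in> Eunits \<and> ra p0 a = la g p0)" for g
  have cP: "c g \<in> Eunits \<and> ra p0 (c g) = la g p0" if "g \<in> carrier G" for g
    unfolding c_def by (rule theI') (use gt p0 that in blast)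
  have cU: "c g = a" if "g \<in> carrier G" "a \<in> Eunits" "ra p0 a = la g p0" for g a
    unfolding c_def by (rule the1_equality) (use gt p0 that in auto)
  have "c \<one>\<^bsub>G\<^esub> = 1" using cU[OF group.is_monoid[OF grp, THEN monoid.one_closed] Eunits_1] gt p0 by simp
  moreover have "c (a \<otimes>\<^bsub>G\<^esub> b) = c a * D (c b) a" if a: "a \<in> carrier G" and b: "b \<in> carrier G" for a b
  proof -
    have du: "D (c b) a \<in> Eunits" using comodule_algebra_unit[OF ca _ a] cP[OF b] by blast
    have "la (a \<otimes>\<^bsub>G\<^esub> b) p0 = la a (ra p0 (c b))" using gt a b p0 cP[OF b] by simp
    also have "\<dots> = ra (la a p0) (D (c b) a)" using gt a p0 cP[OF b] by blast
    also have "\<dots> = ra (ra p0 (c a)) (D (c b) a)" using cP[OF a] by simp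
    also have "\<dots> = ra p0 (c a * D (c b) a)" using gt p0 cP[OF a] du by blast
    finally show ?thesis
      using cU[OF group.is_monoid[OF grp, THEN monoid.m_closed, OF a b]]
        Eunits_mult[OF conjunct1[OF cP[OF a]] du] by simp
  qed
  ultimately have "cocycle G D c" using cP unfolding cocycle_def by blast
  thus ?thesis using that cP by blast
qed

lemma twisted_units_iso:
  fixes D :: "'e::ring_1 \<Rightarrow> 'g \<Rightarrow> 'e" and ra :: "'p \<Rightarrow> 'e \<Rightarrow> 'p"
  assumes ca: "comodule_algebra G scal D" and gt: "group_torsor G D P la ra"
    and p0: "p0 \<in> P" and c: "\<And>g. g \<in> carrier G \<Longrightarrow> c g \<in> Eunits \<and> ra p0 (c g) = la g p0"
  shows "gtorsor_iso G Eunits (\<lambda>g u. c g * D u g) (*) P la ra"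
proof -
  have ra_closed: "\<forall>a\<in>Eunits. ra p0 a \<in> P"
    and ra_mult: "\<forall>a\<in>Eunits. \<forall>b\<in>Eunits. ra (ra p0 a) b = ra p0 (a * b)"
    and simply_trans: "\<forall>q\<in>P. \<exists>!a. a \<in> Eunits \<and> ra p0 a = q"
    and compat: "\<forall>g\<in>carrier G. \<forall>a\<in>Eunits. la g (ra p0 a) = ra (la g p0) (D a g)"
    using gt p0 unfolding group_torsor_def by simp_all
  have "bij_betw (ra p0) Eunits P"
  proof (rule bij_betwI')
    fix a b :: 'e assume a: "a \<in> Eunits" and b: "b \<in> Eunits"
    obtain x where x: "\<forall>y. y \<in> Eunits \<and> ra p0 y = ra p0 a \<longrightarrow> y = x"
      using simply_trans[rule_format, OF ra_closed[rule_format, OF a]] by (rule ex1E)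
    have "a = x" using x[rule_format, of a] a by simp
    moreover have "b = x" if "ra p0 a = ra p0 b" using x[rule_format, of b] b that by simp
    ultimately show "ra p0 a = ra p0 b \<longleftrightarrow> a = b" by auto
  next
    fix a :: 'e assume "a \<in> Eunits"
    thus "ra p0 a \<in> P" using ra_closed by blast
  next
    fix q assume "q \<in> P"
    hence "\<exists>a. a \<in> Eunits \<and> ra p0 a = q" using simply_trans by (simp add: ex1_implies_ex)
    thus "\<exists>a\<in>Eunits. q = ra p0 a" by blast
  qed
  moreover have "ra p0 (c g * D a g) = la g (ra p0 a)"
    if g: "g \<in> carrier G" and a: "a \<in> Eunits" for g a
  proof -
    have cg: "c g \<in> Eunits" "ra p0 (c g) = la g p0" using c[OF g] by auto
    have "la g (ra p0 a) = ra (ra p0 (c g)) (D a g)" using compat g a cg(2) by simp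
    also have "\<dots> = ra p0 (c g * D a g)"
      by (rule ra_mult[rule_format, OF cg(1) comodule_algebra_unit[OF ca a g]])
    finally show ?thesis by (rule sym)
  qed
  ultimately show ?thesis unfolding gtorsor_iso_def
    by (intro exI[of _ "ra p0"] conjI ballI) (simp_all add: ra_mult)
qed

lemma group_torsor_realized:
  fixes D :: "'e::ring_1 \<Rightarrow> 'g \<Rightarrow> 'e"
  assumes grp: "group G" and ca: "comodule_algebra G scal D"
    and gt: "group_torsor G D P la ra"
  shows "\<exists>(tm :: 'e \<Rightarrow> 'e \<Rightarrow> 'e) DT. hopf_torsor G scal D tm DT \<and>
           gtorsor_iso G (Tx tm) (\<lambda>g u. DT u g) tm P la ra"
proof -
  obtain p0 where p0: "p0 \<in> P" using gt unfolding group_torsor_def by blast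
  obtain c where c: "cocycle G D c" and p0c: "\<And>g. g \<in> carrier G \<Longrightarrow> ra p0 (c g) = la g p0"
    using group_torsor_cocycle[OF grp ca gt p0] by blast
  have "gtorsor_iso G Eunits (\<lambda>g u. c g * D u g) (*) P la ra"
    using twisted_units_iso[OF ca gt p0] c p0c unfolding cocycle_def by blast
  with twisted_hopf_torsor[OF ca c] show ?thesis
    by (intro exI[of _ "(*)"] exI[of _ "\<lambda>x g. c g * D x g"]) (simp add: Tx_mult)
qed

theorem corollary3p8:
  fixes G :: "('g,'z) monoid_scheme"
    and scal :: "'k::comm_ring_1 \<Rightarrow> 'e::ring_1"
    and D :: "'e \<Rightarrow> 'g \<Rightarrow> 'e"
  assumes "group G" and "finite (carrier G)" and "comodule_algebra G scal D"
  shows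
    "\<comment> \<open>c is well defined: T^x of a Hopf torsor is a (G,E^x)-group torsor\<close>
     (\<forall>(tm :: 't::ab_group_add \<Rightarrow> 'e \<Rightarrow> 't) DT. hopf_torsor G scal D tm DT \<longrightarrow>
        group_torsor G D (Tx tm) (\<lambda>g u. DT u g) tm) \<and>
     \<comment> \<open>c respects isomorphism and is injective on isomorphism classes\<close>
     (\<forall>(tm :: 't \<Rightarrow> 'e \<Rightarrow> 't) DT (tm' :: 's::ab_group_add \<Rightarrow> 'e \<Rightarrow> 's) DT'.
        hopf_torsor G scal D tm DT \<longrightarrow> hopf_torsor G scal D tm' DT' \<longrightarrow>
        (hopf_iso G tm DT tm' DT' \<longleftrightarrow>
         gtorsor_iso G (Tx tm) (\<lambda>g u. DT u g) tm (Tx tm') (\<lambda>g u. DT' u g) tm')) \<and>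
     \<comment> \<open>c is surjective onto isomorphism classes of group torsors\<close>
     (\<forall>(P :: 'p set) la ra. group_torsor G D P la ra \<longrightarrow>
        (\<exists>(tm :: 'e \<Rightarrow> 'e \<Rightarrow> 'e) DT. hopf_torsor G scal D tm DT \<and>
           gtorsor_iso G (Tx tm) (\<lambda>g u. DT u g) tm P la ra)) \<and>
     \<comment> \<open>c is a map of pointed sets: (E, D) is a Hopf torsor and c(E) is the class of E^x\<close>
     (hopf_torsor G scal D (*) D \<and>
      gtorsor_iso G (Tx (*)) (\<lambda>g u. D u g) (*) Eunits (\<lambda>g u. D u g) (*))"
proof (intro conjI allI impI)
  fix tm :: "'t::ab_group_add \<Rightarrow> 'e \<Rightarrow> 't" and DT
  assume "hopf_torsor G scal D tm DT"
  thus "group_torsor G D (Tx tm) (\<lambda>g u. DT u g) tm"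
    by (rule hopf_torsor_group_torsor[OF assms(3)])
next
  fix tm :: "'t::ab_group_add \<Rightarrow> 'e \<Rightarrow> 't" and DT
    and tm' :: "'s::ab_group_add \<Rightarrow> 'e \<Rightarrow> 's" and DT'
  assume "hopf_torsor G scal D tm DT" and "hopf_torsor G scal D tm' DT'"
  thus "hopf_iso G tm DT tm' DT' \<longleftrightarrow>
      gtorsor_iso G (Tx tm) (\<lambda>g u. DT u g) tm (Tx tm') (\<lambda>g u. DT' u g) tm'"
    using hopf_iso_imp_gtorsor_iso gtorsor_iso_imp_hopf_iso[OF assms(3)] by blast
next
  fix P :: "'p set" and la ra
  assume "group_torsor G D P la ra"
  thus "\<exists>(tm :: 'e \<Rightarrow> 'e \<Rightarrow> 'e) DT. hopf_torsor G scal D tm DT \<and>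
      gtorsor_iso G (Tx tm) (\<lambda>g u. DT u g) tm P la ra"
    by (rule group_torsor_realized[OF assms(1,3)])
next
  have "cocycle G D (\<lambda>_. 1)"
    using assms(3) by (simp add: cocycle_def comodule_algebra_def Eunits_1)
  from twisted_hopf_torsor[OF assms(3) this]
  show "hopf_torsor G scal D (*) D" by simp
  show "gtorsor_iso G (Tx (*)) (\<lambda>g u. D u g) (*) Eunits (\<lambda>g u. D u g) (*)"
    unfolding gtorsor_iso_def Tx_mult by (rule exI[of _ id]) auto
qed

end
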